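(* Let $G=(V,E)$ be a finite graph with boundary $B\subseteq V$. Let $H=(U,D)$ be a demand graph and $F$ a unit $H$-boundary flow in $G$. Then there exists an integral $H$-boundary flow $F^*$ such that $$\operatorname{con}_2(F^* )\le\operatorname{con}_2(F)+\sqrt{\operatorname{con}_1(F)}.$$ Furthermore, if $|B|\ge|V|^{\frac14+\epsilon}$ for some $\epsilon>0$, then $$\operatorname{con}_2(F^* )\le 2\operatorname{con}_2(F)+|B|^{\frac{2}{1+4\epsilon}}.$$
   Context: For $u,v\in V$, $\mathcal{P}_{uv}$ is the set of simple paths in $G$ between $u$ and $v$; "$x\in p$" means $x$ is a vertex of path $p$. Let $\mathcal{P}=\bigcup_{u,v\in B}\mathcal{P}_{uv}$. A boundary flow is a map $F:\mathcal{P}\to\mathbb{R}_+$. Its vertex congestion at $v\in V$ is $C_F(v)=\sum_{p\in\mathcal{P}:v\in p}F(p)$, and $\operatorname{con}_p(F)=\left(\sum_{v\in V}C_F(v)^p\right)^{1/p}$ for $p\ge1$. $F$ is integral if $|\{p\in\mathcal{P}_{uv}:F(p)>0\}|\le1$ for all $u,v\in B$. A demand graph is any graph $H=(U,D)$. $F$ is a unit $H$-boundary flow if there exists an injective map $g:U\to B$ such that $\sum_{p\in\mathcal{P}_{g(i)g(j)}}F(p)=1$ for every edge $(i,j)\in D$, and $F(p)=0$ whenever $p\notin\bigcup_{(i,j)\in D}\mathcal{P}_{g(i)g(j)}$. An integral $H$-boundary flow is a unit $H$-boundary flow that is also integral. *)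

theory Defs
  imports Complex_Main
begin

definition finite_graph :: "'a set \<Rightarrow> 'a set set \<Rightarrow> bool" where
  "finite_graph V E \<longleftrightarrow> finite V \<and> (\<forall>e\<in>E. card e = 2 \<and> e \<subseteq> V)"

definition demand_graph :: "'b set \<Rightarrow> 'b set set \<Rightarrow> bool" where
  "demand_graph U D \<longleftrightarrow> (\<forall>e\<in>D. card e = 2 \<and> e \<subseteq> U)"

definition simple_path :: "'a set \<Rightarrow> 'a set set \<Rightarrow> 'a list \<Rightarrow> bool" where
  "simple_path V E p \<longleftrightarrow> p \<noteq> [] \<and> distinct p \<and> set p \<subseteq> V \<and>
     (\<forall>i. Suc i < length p \<longrightarrow> {p ! i, p ! Suc i} \<in> E)"

text \<open>Since G is undirected, a path and its
  reversal are the same path; we represent each path by its vertex list oriented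
  from the smaller endpoint to the larger one, so that P_uv = P_vu.\<close>
definition paths_between :: "'a::linorder set \<Rightarrow> 'a set set \<Rightarrow> 'a \<Rightarrow> 'a \<Rightarrow> 'a list set" where
  "paths_between V E u v =
     {p. simple_path V E p \<and> hd p = min u v \<and> last p = max u v}"

definition all_paths :: "'a::linorder set \<Rightarrow> 'a set set \<Rightarrow> 'a set \<Rightarrow> 'a list set" where
  "all_paths V E B = (\<Union>u\<in>B. \<Union>v\<in>B. paths_between V E u v)"

definition boundary_flow :: "'a::linorder set \<Rightarrow> 'a set set \<Rightarrow> 'a set \<Rightarrow> ('a list \<Rightarrow> real) \<Rightarrow> bool" where
  "boundary_flow V E B F \<longleftrightarrow> (\<forall>p\<in>all_paths V E B. F p \<ge> 0)"

definition congestion :: "'a::linorder set \<Rightarrow> 'a set set \<Rightarrow> 'a set \<Rightarrow> ('a list \<Rightarrow> real) \<Rightarrow> 'a \<Rightarrow> real" where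
  "congestion V E B F v = (\<Sum>p\<in>{p\<in>all_paths V E B. v \<in> set p}. F p)"

definition con :: "'a::linorder set \<Rightarrow> 'a set set \<Rightarrow> 'a set \<Rightarrow> real \<Rightarrow> ('a list \<Rightarrow> real) \<Rightarrow> real" where
  "con V E B q F = (\<Sum>v\<in>V. congestion V E B F v powr q) powr (1 / q)"

definition integral_flow :: "'a::linorder set \<Rightarrow> 'a set set \<Rightarrow> 'a set \<Rightarrow> ('a list \<Rightarrow> real) \<Rightarrow> bool" where
  "integral_flow V E B F \<longleftrightarrow>
     (\<forall>u\<in>B. \<forall>v\<in>B. card {p\<in>paths_between V E u v. F p > 0} \<le> 1)"

definition unit_H_flow :: "'a::linorder set \<Rightarrow> 'a set set \<Rightarrow> 'a set \<Rightarrow> 'b set \<Rightarrow> 'b set set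
    \<Rightarrow> ('a list \<Rightarrow> real) \<Rightarrow> bool" where
  "unit_H_flow V E B U D F \<longleftrightarrow> boundary_flow V E B F \<and>
     (\<exists>g. inj_on g U \<and> g ` U \<subseteq> B \<and>
        (\<forall>i j. {i, j} \<in> D \<longrightarrow> (\<Sum>p\<in>paths_between V E (g i) (g j). F p) = 1) \<and>
        (\<forall>p\<in>all_paths V E B.
           (\<forall>i j. {i, j} \<in> D \<longrightarrow> p \<notin> paths_between V E (g i) (g j)) \<longrightarrow> F p = 0))"

definition integral_H_flow :: "'a::linorder set \<Rightarrow> 'a set set \<Rightarrow> 'a set \<Rightarrow> 'b set \<Rightarrow> 'b set set
    \<Rightarrow> ('a list \<Rightarrow> real) \<Rightarrow> bool" where
  "integral_H_flow V E B U D F \<longleftrightarrow> unit_H_flow V E B U D F \<and> integral_flow V E B F"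

end

theory Submission
  imports Defs "HOL-Library.Indicator_Function" "HOL-Analysis.L2_Norm"
begin

text \<open>Route every demand along a single one of its paths, chosen by the method of conditional
  expectations. If each demand independently picked a path with the probabilities given by F,
  the expected sum of squared congestions would be
  \<open>\<Sum>\<^sub>v C(v)\<^sup>2 + \<Sum>\<^sub>v \<Sum>\<^sub>k (f\<^sub>k(v) - f\<^sub>k(v)\<^sup>2) \<le> \<Sum>\<^sub>v C(v)\<^sup>2 + \<Sum>\<^sub>v C(v)\<close>,
  where \<open>f\<^sub>k(v)\<close> is the load of demand k on v and \<open>C = \<Sum>\<^sub>k f\<^sub>k\<close>;
  fixing the demands one at a time, each time choosing a path that does not increase the
  conditional expectation, yields an integral flow with this bound, and
  \<open>sqrt (a + b) \<le> sqrt a + sqrt b\<close> gives the first inequality.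
  For the second, Cauchy-Schwarz gives \<open>con\<^sub>1 \<le> sqrt |V| con\<^sub>2\<close>, so by AM-GM
  \<open>sqrt con\<^sub>1 \<le> con\<^sub>2 + sqrt |V|\<close>, and \<open>sqrt |V| \<le> |B|\<^bsup>2/(1+4\<epsilon>)\<^esup>\<close> when
  \<open>|V|\<^bsup>1/4+\<epsilon>\<^esup> \<le> |B|\<close>.\<close>

lemma ex_le_of_weighted_average_le:
  fixes w R :: "'p \<Rightarrow> real"
  assumes w_nonneg: "\<And>p. p \<in> S \<Longrightarrow> 0 \<le> w p" and w_sum: "sum w S = 1"
    and average: "(\<Sum>p\<in>S. w p * R p) \<le> T"
  shows "\<exists>p\<in>S. R p \<le> T"
proof -
  have "finite S"
    by (rule ccontr) (use w_sum in simp)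
  moreover have "S \<noteq> {}"
    using w_sum by auto
  ultimately obtain p where p: "p \<in> S" "\<And>q. q \<in> S \<Longrightarrow> R p \<le> R q"
    using arg_min_if_finite[of S R] by (meson not_less)
  have "R p = (\<Sum>q\<in>S. w q * R p)"
    by (simp add: w_sum flip: sum_distrib_right)
  also have "\<dots> \<le> (\<Sum>q\<in>S. w q * R q)"
    by (intro sum_mono mult_left_mono p(2) w_nonneg)
  finally show ?thesis
    using p(1) average by force
qed

lemma weighted_average_sum_squares_add_indicator:
  fixes b :: "'v \<Rightarrow> real" and w :: "'v list \<Rightarrow> real"
  assumes w_sum: "sum w S = 1"
  defines "f v \<equiv> \<Sum>p\<in>S. w p * indicator (set p) v"
  shows "(\<Sum>p\<in>S. w p * (\<Sum>v\<in>V. (b v + indicator (set p) v)\<^sup>2))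
           = (\<Sum>v\<in>V. (b v + f v)\<^sup>2) + (\<Sum>v\<in>V. f v) - (\<Sum>v\<in>V. (f v)\<^sup>2)"
proof -
  have square: "(b v + indicator (set p) v)\<^sup>2 = (b v)\<^sup>2 + (2 * b v + 1) * indicator (set p) v"
    for v and p :: "'v list"
    by (simp add: power2_sum indicator_def)
  have "(\<Sum>p\<in>S. w p * (\<Sum>v\<in>V. (b v + indicator (set p) v)\<^sup>2))
      = (\<Sum>p\<in>S. \<Sum>v\<in>V. w p * (b v)\<^sup>2 + (2 * b v + 1) * (w p * indicator (set p) v))"
    unfolding square sum_distrib_left by (simp only: distrib_left mult.left_commute)
  also have "\<dots> = (\<Sum>v\<in>V. \<Sum>p\<in>S. w p * (b v)\<^sup>2 + (2 * b v + 1) * (w p * indicator (set p) v))"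
    by (rule sum.swap)
  also have "\<dots> = (\<Sum>v\<in>V. (b v)\<^sup>2 + (2 * b v + 1) * f v)"
    unfolding f_def sum.distrib by (simp only: w_sum flip: sum_distrib_left sum_distrib_right)
  also have "\<dots> = (\<Sum>v\<in>V. (b v + f v)\<^sup>2 + f v - (f v)\<^sup>2)"
    by (intro sum.cong) (simp_all add: power2_sum algebra_simps)
  also have "\<dots> = (\<Sum>v\<in>V. (b v + f v)\<^sup>2) + (\<Sum>v\<in>V. f v) - (\<Sum>v\<in>V. (f v)\<^sup>2)"
    by (simp add: sum.distrib sum_subtractf)
  finally show ?thesis .
qed

lemma ex_path_sum_squares_le:
  fixes b :: "'v \<Rightarrow> real" and w :: "'v list \<Rightarrow> real"
  assumes "\<And>p. p \<in> S \<Longrightarrow> 0 \<le> w p" and "sum w S = 1"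
  shows "\<exists>p\<in>S. (\<Sum>v\<in>V. (b v + indicator (set p) v)\<^sup>2)
           \<le> (\<Sum>v\<in>V. (b v + (\<Sum>p\<in>S. w p * indicator (set p) v))\<^sup>2)
              + (\<Sum>v\<in>V. \<Sum>p\<in>S. w p * indicator (set p) v)"
proof (rule ex_le_of_weighted_average_le[OF assms])
  show "(\<Sum>p\<in>S. w p * (\<Sum>v\<in>V. (b v + indicator (set p) v)\<^sup>2))
      \<le> (\<Sum>v\<in>V. (b v + (\<Sum>p\<in>S. w p * indicator (set p) v))\<^sup>2)
         + (\<Sum>v\<in>V. \<Sum>p\<in>S. w p * indicator (set p) v)"
    unfolding weighted_average_sum_squares_add_indicator[OF assms(2)] by (simp add: sum_nonneg)
qed

lemma ex_choice_sum_squares_le: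
  fixes a :: "'v \<Rightarrow> real" and w :: "'v list \<Rightarrow> real" and S :: "'k \<Rightarrow> 'v list set"
  assumes "finite K"
    and "\<And>k p. k \<in> K \<Longrightarrow> p \<in> S k \<Longrightarrow> 0 \<le> w p"
    and "\<And>k. k \<in> K \<Longrightarrow> sum w (S k) = 1"
  shows "\<exists>\<sigma>. (\<forall>k\<in>K. \<sigma> k \<in> S k) \<and>
           (\<Sum>v\<in>V. (a v + (\<Sum>k\<in>K. indicator (set (\<sigma> k)) v))\<^sup>2)
             \<le> (\<Sum>v\<in>V. (a v + (\<Sum>k\<in>K. \<Sum>p\<in>S k. w p * indicator (set p) v))\<^sup>2)
                + (\<Sum>v\<in>V. \<Sum>k\<in>K. \<Sum>p\<in>S k. w p * indicator (set p) v)"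
  using assms
proof (induction K arbitrary: a)
  case empty
  show ?case by simp
next
  case (insert k0 K)
  define C where "C v = (\<Sum>k\<in>K. \<Sum>p\<in>S k. w p * indicator (set p) v)" for v
  define f where "f v = (\<Sum>p\<in>S k0. w p * indicator (set p) v)" for v
  have load: "(\<Sum>k\<in>insert k0 K. \<Sum>p\<in>S k. w p * indicator (set p) v) = f v + C v" for v
    using insert.hyps by (simp add: f_def C_def)
  txt \<open>The path of \<open>k0\<close> is chosen against the background load \<open>a\<close> plus the fractional
    load \<open>C\<close> of the remaining demands; these are then rounded with \<open>a\<close> plus that path as
    background load.\<close>
  obtain p where p: "p \<in> S k0"
    and p_le: "(\<Sum>v\<in>V. (a v + C v + indicator (set p) v)\<^sup>2)
                 \<le> (\<Sum>v\<in>V. (a v + C v + f v)\<^sup>2) + (\<Sum>v\<in>V. f v)"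
    using ex_path_sum_squares_le[of "S k0" w "\<lambda>v. a v + C v" V] insert.prems
    unfolding f_def by blast
  obtain \<sigma> where \<sigma>: "\<forall>k\<in>K. \<sigma> k \<in> S k"
    and \<sigma>_le: "(\<Sum>v\<in>V. (a v + indicator (set p) v + (\<Sum>k\<in>K. indicator (set (\<sigma> k)) v))\<^sup>2)
                 \<le> (\<Sum>v\<in>V. (a v + indicator (set p) v + C v)\<^sup>2) + (\<Sum>v\<in>V. C v)"
    using insert.IH[of "\<lambda>v. a v + indicator (set p) v"] insert.prems
    unfolding C_def by blast
  have chosen: "(\<Sum>k\<in>insert k0 K. indicator (set ((\<sigma>(k0 := p)) k)) v)
      = indicator (set p) v + (\<Sum>k\<in>K. indicator (set (\<sigma> k)) v :: real)" for v
    using insert.hyps by (auto intro!: sum.cong)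
  have "(\<Sum>v\<in>V. (a v + (\<Sum>k\<in>insert k0 K. indicator (set ((\<sigma>(k0 := p)) k)) v))\<^sup>2)
      = (\<Sum>v\<in>V. (a v + indicator (set p) v + (\<Sum>k\<in>K. indicator (set (\<sigma> k)) v))\<^sup>2)"
    unfolding chosen by (simp add: add.assoc)
  also have "\<dots> \<le> (\<Sum>v\<in>V. (a v + C v + indicator (set p) v)\<^sup>2) + (\<Sum>v\<in>V. C v)"
    using \<sigma>_le by (simp add: ac_simps)
  also have "\<dots> \<le> (\<Sum>v\<in>V. (a v + C v + f v)\<^sup>2) + (\<Sum>v\<in>V. f v) + (\<Sum>v\<in>V. C v)"
    using p_le by simp
  also have "\<dots> = (\<Sum>v\<in>V. (a v + (\<Sum>k\<in>insert k0 K. \<Sum>p\<in>S k. w p * indicator (set p) v))\<^sup>2)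
                   + (\<Sum>v\<in>V. \<Sum>k\<in>insert k0 K. \<Sum>p\<in>S k. w p * indicator (set p) v)"
    unfolding load by (simp add: sum.distrib ac_simps)
  finally show ?case
    using \<sigma> p insert.hyps by (intro exI[of _ "\<sigma>(k0 := p)"]) auto
qed

lemma congestion_nonneg: "boundary_flow V E B F \<Longrightarrow> 0 \<le> congestion V E B F v"
  unfolding boundary_flow_def congestion_def by (auto intro: sum_nonneg)

lemma con_2_eq_L2_set:
  assumes "boundary_flow V E B F"
  shows "con V E B 2 F = L2_set (congestion V E B F) V"
  using congestion_nonneg[OF assms]
  unfolding con_def L2_set_def by (simp add: sum_nonneg powr_half_sqrt)

lemma con_1_eq_sum:
  assumes "boundary_flow V E B F"
  shows "con V E B 1 F = (\<Sum>v\<in>V. congestion V E B F v)"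
  using congestion_nonneg[OF assms]
  unfolding con_def by (simp add: sum_nonneg powr_one)

lemma con_2_le_add_sqrt_con_1:
  assumes "boundary_flow V E B F" and "boundary_flow V E B F'"
    and "(\<Sum>v\<in>V. (congestion V E B F' v)\<^sup>2)
           \<le> (\<Sum>v\<in>V. (congestion V E B F v)\<^sup>2) + (\<Sum>v\<in>V. congestion V E B F v)"
  shows "con V E B 2 F' \<le> con V E B 2 F + sqrt (con V E B 1 F)"
proof -
  have "con V E B 2 F' \<le> sqrt ((\<Sum>v\<in>V. (congestion V E B F v)\<^sup>2) + (\<Sum>v\<in>V. congestion V E B F v))"
    using assms(3) by (simp add: con_2_eq_L2_set[OF assms(2)] L2_set_def)
  also have "\<dots> \<le> con V E B 2 F + sqrt (con V E B 1 F)"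
    using congestion_nonneg[OF assms(1)]
    by (simp add: con_2_eq_L2_set[OF assms(1)] con_1_eq_sum[OF assms(1)] L2_set_def
        sqrt_add_le_add_sqrt sum_nonneg)
  finally show ?thesis .
qed

lemma sqrt_con_1_le:
  assumes "boundary_flow V E B F"
  shows "sqrt (con V E B 1 F) \<le> con V E B 2 F + sqrt (card V)"
proof -
  have "con V E B 1 F \<le> con V E B 2 F * sqrt (card V)"
    using L2_set_mult_ineq[of "congestion V E B F" "\<lambda>_. 1" V] congestion_nonneg[OF assms]
    by (simp add: con_1_eq_sum[OF assms] con_2_eq_L2_set[OF assms] L2_set_constant)
  then have "sqrt (con V E B 1 F) \<le> sqrt (con V E B 2 F * sqrt (card V))"
    by simp
  also have "\<dots> \<le> (con V E B 2 F + sqrt (card V)) / 2"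
    by (rule arith_geo_mean_sqrt) (simp_all add: con_2_eq_L2_set[OF assms])
  also have "\<dots> \<le> con V E B 2 F + sqrt (card V)"
    by (simp add: con_2_eq_L2_set[OF assms])
  finally show ?thesis .
qed

lemma sqrt_le_powr_if_powr_le:
  fixes x y \<epsilon> :: real
  assumes "0 < \<epsilon>" and "0 \<le> x" and "x powr (1/4 + \<epsilon>) \<le> y"
  shows "sqrt x \<le> y powr (2 / (1 + 4 * \<epsilon>))"
proof -
  have exponent: "(1/4 + \<epsilon>) * (2 / (1 + 4 * \<epsilon>)) = 1/2"
    using assms(1) by (simp add: field_simps)
  have "sqrt x = x powr ((1/4 + \<epsilon>) * (2 / (1 + 4 * \<epsilon>)))"
    unfolding exponent using assms(2) by (simp add: powr_half_sqrt)
  also have "\<dots> = (x powr (1/4 + \<epsilon>)) powr (2 / (1 + 4 * \<epsilon>))"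
    by (rule powr_powr[symmetric])
  also have "\<dots> \<le> y powr (2 / (1 + 4 * \<epsilon>))"
    using assms by (intro powr_mono2) auto
  finally show ?thesis .
qed

lemma paths_between_commute: "paths_between V E u v = paths_between V E v u"
  unfolding paths_between_def by (simp add: min.commute max.commute)

lemma hd_last_paths_between: "p \<in> paths_between V E u v \<Longrightarrow> {hd p, last p} = {u, v}"
  unfolding paths_between_def by (auto simp: min_def max_def)

lemma finite_all_paths:
  assumes "finite V"
  shows "finite (all_paths V E B)"
proof (rule finite_subset[OF _ finite_subset_distinct[OF assms]])
  show "all_paths V E B \<subseteq> {xs. set xs \<subseteq> V \<and> distinct xs}"
    unfolding all_paths_def paths_between_def simple_path_def by auto
qed

locale demand_routing =
  fixes V :: "'a::linorder set" and E :: "'a set set" and B :: "'a set"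
    and U :: "'b set" and D :: "'b set set" and g :: "'b \<Rightarrow> 'a"
  assumes finite_V: "finite V" and B_subset: "B \<subseteq> V"
    and demand_graph: "demand_graph U D"
    and inj_g: "inj_on g U" and g_into_B: "g ` U \<subseteq> B"
begin

definition demand_paths :: "'b set \<Rightarrow> 'a list set" where
  "demand_paths k = paths_between V E (Min (g ` k)) (Max (g ` k))"

lemma demand_paths_pair [simp]: "demand_paths {i, j} = paths_between V E (g i) (g j)"
  unfolding demand_paths_def
  by (cases "g i \<le> g j") (simp_all add: min_def max_def paths_between_commute)

lemma demand_edgeE:
  assumes "k \<in> D"
  obtains i j where "k = {i, j}" and "i \<in> U" and "j \<in> U"
  using demand_graph assms unfolding demand_graph_def by (metis card_2_iff insert_subset)

lemma ball_demands_iff: "(\<forall>k\<in>D. P k) \<longleftrightarrow> (\<forall>i j. {i, j} \<in> D \<longrightarrow> P {i, j})"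
  by (metis demand_edgeE)

lemma finite_demands: "finite D"
proof -
  have "finite U"
    using finite_imageD[OF finite_subset[OF g_into_B] inj_g] finite_subset[OF B_subset finite_V]
    by blast
  moreover have "D \<subseteq> Pow U"
    using demand_graph unfolding demand_graph_def by blast
  ultimately show ?thesis
    by (metis finite_Pow_iff finite_subset)
qed

lemma demand_paths_subset: "k \<in> D \<Longrightarrow> demand_paths k \<subseteq> all_paths V E B"
  by (elim demand_edgeE) (use g_into_B in \<open>auto simp: all_paths_def\<close>)

lemma finite_demand_paths: "k \<in> D \<Longrightarrow> finite (demand_paths k)"
  using demand_paths_subset finite_all_paths[OF finite_V] by (rule finite_subset)

lemma hd_last_demand_paths: "k \<in> D \<Longrightarrow> p \<in> demand_paths k \<Longrightarrow> {hd p, last p} = g ` k"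
  by (elim demand_edgeE) (simp add: hd_last_paths_between)

lemma demands_subset: "k \<in> D \<Longrightarrow> k \<subseteq> U"
  using demand_graph unfolding demand_graph_def by blast

lemma demand_paths_disjoint:
  assumes "k \<in> D" and "k' \<in> D" and "p \<in> demand_paths k" and "p \<in> demand_paths k'"
  shows "k = k'"
proof -
  have "g ` k = g ` k'"
    using hd_last_demand_paths assms by metis
  then show ?thesis
    using assms(1,2) demands_subset by (simp add: inj_on_image_eq_iff[OF inj_g])
qed

definition routes_demands :: "('a list \<Rightarrow> real) \<Rightarrow> bool" where
  "routes_demands F \<longleftrightarrow> (\<forall>k\<in>D. sum F (demand_paths k) = 1) \<and>
     (\<forall>p\<in>all_paths V E B. (\<forall>k\<in>D. p \<notin> demand_paths k) \<longrightarrow> F p = 0)"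

lemma routes_demands_iff:
  "routes_demands F \<longleftrightarrow>
     (\<forall>i j. {i, j} \<in> D \<longrightarrow> (\<Sum>p\<in>paths_between V E (g i) (g j). F p) = 1) \<and>
     (\<forall>p\<in>all_paths V E B.
        (\<forall>i j. {i, j} \<in> D \<longrightarrow> p \<notin> paths_between V E (g i) (g j)) \<longrightarrow> F p = 0)"
  unfolding routes_demands_def by (simp only: ball_demands_iff demand_paths_pair)

lemma unit_H_flowI: "boundary_flow V E B F \<Longrightarrow> routes_demands F \<Longrightarrow> unit_H_flow V E B U D F"
  unfolding unit_H_flow_def routes_demands_iff using inj_g g_into_B by blast

lemma congestion_eq_sum_demand_paths:
  assumes "routes_demands F"
  shows "congestion V E B F v = (\<Sum>k\<in>D. \<Sum>p\<in>demand_paths k. F p * indicator (set p) v)"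
proof -
  have "congestion V E B F v = (\<Sum>p\<in>all_paths V E B. if v \<in> set p then F p else 0)"
    unfolding congestion_def by (rule sum.inter_filter[OF finite_all_paths[OF finite_V]])
  also have "\<dots> = (\<Sum>p\<in>all_paths V E B. F p * indicator (set p) v)"
    by (intro sum.cong) (simp_all add: indicator_def)
  also have "\<dots> = (\<Sum>p\<in>(\<Union>k\<in>D. demand_paths k). F p * indicator (set p) v)"
    using assms demand_paths_subset finite_all_paths[OF finite_V]
    by (intro sum.mono_neutral_right) (auto simp: routes_demands_def)
  also have "\<dots> = (\<Sum>k\<in>D. \<Sum>p\<in>demand_paths k. F p * indicator (set p) v)"
    using finite_demands finite_demand_paths demand_paths_disjoint
    by (intro sum.UNION_disjoint) blast+
  finally show ?thesis .
qed

context
  fixes \<sigma> :: "'b set \<Rightarrow> 'a list"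
  assumes \<sigma>_demand_paths: "\<forall>k\<in>D. \<sigma> k \<in> demand_paths k"
begin

lemma indicator_choice_demand_paths:
  assumes "k \<in> D" and "p \<in> demand_paths k"
  shows "indicator (\<sigma> ` D) p = (if p = \<sigma> k then 1 else 0 :: real)"
  using assms \<sigma>_demand_paths demand_paths_disjoint by (auto simp: indicator_def)

lemma routes_demands_choice: "routes_demands (indicator (\<sigma> ` D))"
  unfolding routes_demands_def
proof (intro conjI ballI impI)
  fix k assume "k \<in> D"
  then show "sum (indicator (\<sigma> ` D)) (demand_paths k) = (1 :: real)"
    using \<sigma>_demand_paths finite_demand_paths
    by (simp add: indicator_choice_demand_paths cong: sum.cong)
next
  fix p assume "\<forall>k\<in>D. p \<notin> demand_paths k"
  then have "p \<notin> \<sigma> ` D"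
    using \<sigma>_demand_paths by blast
  then show "indicator (\<sigma> ` D) p = 0"
    by simp
qed

lemma congestion_choice:
  "congestion V E B (indicator (\<sigma> ` D)) v = (\<Sum>k\<in>D. indicator (set (\<sigma> k)) v)"
proof -
  have "(\<Sum>p\<in>demand_paths k. indicator (\<sigma> ` D) p * indicator (set p) v)
      = (indicator (set (\<sigma> k)) v :: real)" if "k \<in> D" for k
  proof -
    have "(\<Sum>p\<in>demand_paths k. indicator (\<sigma> ` D) p * indicator (set p) v)
        = (\<Sum>p\<in>demand_paths k. if p = \<sigma> k then indicator (set p) v else 0 :: real)"
      using that by (intro sum.cong) (simp_all add: indicator_choice_demand_paths)
    also have "\<dots> = indicator (set (\<sigma> k)) v"
      using that \<sigma>_demand_paths finite_demand_paths by simp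
    finally show ?thesis .
  qed
  then show ?thesis
    unfolding congestion_eq_sum_demand_paths[OF routes_demands_choice] by (simp cong: sum.cong)
qed

lemma integral_flow_choice: "integral_flow V E B (indicator (\<sigma> ` D))"
  unfolding integral_flow_def
proof (intro ballI)
  fix u v assume "u \<in> B" "v \<in> B"
  let ?P = "{p \<in> paths_between V E u v. 0 < (indicator (\<sigma> ` D) p :: real)}"
  have endpoints: "g ` k = {u, v}" if "p \<in> ?P" "k \<in> D" "p = \<sigma> k" for p k
    using hd_last_demand_paths[of k p] hd_last_paths_between[of p V E u v] that \<sigma>_demand_paths
    by auto
  have unique: "p = q" if "p \<in> ?P" and "q \<in> ?P" for p q
  proof -
    have "p \<in> \<sigma> ` D" and "q \<in> \<sigma> ` D"
      using that by (metis (mono_tags) indicator_simps(2) less_irrefl mem_Collect_eq)+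
    then obtain k k' where k: "k \<in> D" "p = \<sigma> k" and k': "k' \<in> D" "q = \<sigma> k'"
      by blast
    have "g ` k = g ` k'"
      using endpoints[OF that(1) k] endpoints[OF that(2) k'] by simp
    then show "p = q"
      using k k' demands_subset by (simp add: inj_on_image_eq_iff[OF inj_g])
  qed
  have "?P \<subseteq> all_paths V E B"
    using \<open>u \<in> B\<close> \<open>v \<in> B\<close> by (auto simp: all_paths_def)
  then have "finite ?P"
    using finite_all_paths[OF finite_V] by (rule finite_subset)
  then have "card ?P \<le> Suc 0"
    unfolding card_le_Suc0_iff_eq[OF \<open>finite ?P\<close>] using unique by blast
  then show "card ?P \<le> 1"
    by simp
qed

end

lemma ex_integral_H_flow_sum_squares_le:
  assumes "boundary_flow V E B F" and "routes_demands F"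
  shows "\<exists>F'. integral_H_flow V E B U D F' \<and>
           (\<Sum>v\<in>V. (congestion V E B F' v)\<^sup>2)
             \<le> (\<Sum>v\<in>V. (congestion V E B F v)\<^sup>2) + (\<Sum>v\<in>V. congestion V E B F v)"
proof -
  have "\<And>k p. k \<in> D \<Longrightarrow> p \<in> demand_paths k \<Longrightarrow> 0 \<le> F p"
    using assms(1) demand_paths_subset unfolding boundary_flow_def by blast
  moreover have "\<And>k. k \<in> D \<Longrightarrow> sum F (demand_paths k) = 1"
    using assms(2) unfolding routes_demands_def by blast
  ultimately obtain \<sigma> where \<sigma>: "\<forall>k\<in>D. \<sigma> k \<in> demand_paths k"
    and \<sigma>_le: "(\<Sum>v\<in>V. (0 + (\<Sum>k\<in>D. indicator (set (\<sigma> k)) v))\<^sup>2)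
      \<le> (\<Sum>v\<in>V. (0 + (\<Sum>k\<in>D. \<Sum>p\<in>demand_paths k. F p * indicator (set p) v))\<^sup>2)
         + (\<Sum>v\<in>V. \<Sum>k\<in>D. \<Sum>p\<in>demand_paths k. F p * indicator (set p) v)"
    using ex_choice_sum_squares_le[OF finite_demands, of demand_paths F "\<lambda>_. 0" V] by blast
  have "boundary_flow V E B (indicator (\<sigma> ` D))"
    by (simp add: boundary_flow_def)
  then have "integral_H_flow V E B U D (indicator (\<sigma> ` D))"
    unfolding integral_H_flow_def
    using unit_H_flowI routes_demands_choice[OF \<sigma>] integral_flow_choice[OF \<sigma>] by blast
  moreover have "(\<Sum>v\<in>V. (congestion V E B (indicator (\<sigma> ` D)) v)\<^sup>2)
      \<le> (\<Sum>v\<in>V. (congestion V E B F v)\<^sup>2) + (\<Sum>v\<in>V. congestion V E B F v)"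
    using \<sigma>_le by (simp add: congestion_choice[OF \<sigma>] congestion_eq_sum_demand_paths[OF assms(2)])
  ultimately show ?thesis
    by blast
qed

end

lemma unit_H_flowE:
  assumes "finite V" and "B \<subseteq> V" and "demand_graph U D" and "unit_H_flow V E B U D F"
  obtains g where "demand_routing V B U D g" and "boundary_flow V E B F"
    and "demand_routing.routes_demands V E B D g F"
proof -
  obtain g where g: "inj_on g U" "g ` U \<subseteq> B"
    and routes_g: "(\<forall>i j. {i, j} \<in> D \<longrightarrow> (\<Sum>p\<in>paths_between V E (g i) (g j). F p) = 1) \<and>
       (\<forall>p\<in>all_paths V E B.
          (\<forall>i j. {i, j} \<in> D \<longrightarrow> p \<notin> paths_between V E (g i) (g j)) \<longrightarrow> F p = 0)"
    using assms(4) unfolding unit_H_flow_def by blast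
  have routing: "demand_routing V B U D g"
    using assms(1-3) g by unfold_locales
  then interpret demand_routing V E B U D g .
  show thesis
  proof (rule that[OF routing])
    show "boundary_flow V E B F"
      using assms(4) unfolding unit_H_flow_def by blast
    show "routes_demands F"
      using routes_g by (simp only: routes_demands_iff)
  qed
qed

theorem mainTheorem11:
  fixes V :: "'a::linorder set" and E :: "'a set set" and B :: "'a set"
    and U :: "'b set" and D :: "'b set set" and F :: "'a list \<Rightarrow> real"
  assumes "finite_graph V E" and "B \<subseteq> V"
    and "demand_graph U D"
    and "unit_H_flow V E B U D F"
  shows "\<exists>Fs. integral_H_flow V E B U D Fs \<and>
           con V E B 2 Fs \<le> con V E B 2 F + sqrt (con V E B 1 F) \<and>
           (\<forall>\<epsilon>::real. \<epsilon> > 0 \<longrightarrow> real (card B) \<ge> real (card V) powr (1/4 + \<epsilon>) \<longrightarrow>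
              con V E B 2 Fs \<le> 2 * con V E B 2 F + real (card B) powr (2 / (1 + 4 * \<epsilon>)))"
proof -
  obtain g where routing: "demand_routing V B U D g"
    and F: "boundary_flow V E B F" and routes: "demand_routing.routes_demands V E B D g F"
    using assms unfolding finite_graph_def by (auto elim: unit_H_flowE)
  interpret demand_routing V E B U D g
    by (fact routing)
  obtain Fs where Fs: "integral_H_flow V E B U D Fs"
    and squares: "(\<Sum>v\<in>V. (congestion V E B Fs v)\<^sup>2)
                    \<le> (\<Sum>v\<in>V. (congestion V E B F v)\<^sup>2) + (\<Sum>v\<in>V. congestion V E B F v)"
    using ex_integral_H_flow_sum_squares_le[OF F routes] by blast
  have "boundary_flow V E B Fs"
    using Fs unfolding integral_H_flow_def unit_H_flow_def by blast
  then have con_2: "con V E B 2 Fs \<le> con V E B 2 F + sqrt (con V E B 1 F)"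
    by (rule con_2_le_add_sqrt_con_1[OF F _ squares])
  have "con V E B 2 Fs \<le> 2 * con V E B 2 F + real (card B) powr (2 / (1 + 4 * \<epsilon>))"
    if "\<epsilon> > 0" and "real (card B) \<ge> real (card V) powr (1/4 + \<epsilon>)" for \<epsilon> :: real
    using con_2 sqrt_con_1_le[OF F] sqrt_le_powr_if_powr_le[OF that(1) _ that(2)] by simp
  with Fs con_2 show ?thesis
    by blast
qed

end
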